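(* For every $n\ge k$, every $\beta\in\mathbb{R}^k$ and every $\sigma>0$, the distribution of $\sqrt{n}(\tilde\beta-\beta)$ under $\mathbb{P}_{n,\beta,\sigma}$ equals the distribution of $$B_n\sqrt n\beta_2 + C_n\sqrt n Z_1 + \Big[1+\exp(2\alpha k_2)\exp\big(-\alpha\|Z_2+(X_2'(I-P_R)X_2)^{1/2}\beta_2\|^2/\sigma^2\big)\Big]^{-1}\{D_n\sqrt n Z_2 - B_n\sqrt n\beta_2\},$$ which also equals the distribution of $$C_n\sqrt n Z_1 + D_n\sqrt n Z_2 - \Big[1+\exp(-2\alpha k_2)\exp\big(\alpha\|Z_2+(X_2'(I-P_R)X_2)^{1/2}\beta_2\|^2/\sigma^2\big)\Big]^{-1}\{D_n\sqrt n Z_2 - B_n\sqrt n\beta_2\},$$ where $$B_n=\begin{bmatrix}(X_1'X_1)^{-1}X_1'X_2\\ -I_{k_2}\end{bmatrix},\quad C_n=\begin{bmatrix}(X_1'X_1)^{-1/2}\\ 0_{k_2\times k_1}\end{bmatrix},\quad D_n=\begin{bmatrix}-(X_1'X_1)^{-1}X_1'X_2(X_2'(I-P_R)X_2)^{-1/2}\\ (X_2'(I-P_R)X_2)^{-1/2}\end{bmatrix},$$ and $Z_1\sim N(0,\sigma^2I_{k_1})$, $Z_2\sim N(0,\sigma^2 I_{k_2})$ are independent.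
   Context: Setup: for each sample size $n$, $Y=X\beta+u$, where $Y$ is $n\times1$, $X$ is a non-stochastic $n\times k$ matrix of full column rank $k$ (so $n\ge k$), $k>1$, and $u\sim N(0,\sigma^2I_n)$ with $0<\sigma^2<\infty$ known. Entries of $Y,X,u$ may depend on $n$. $\mathbb{P}_{n,\beta,\sigma}$ denotes the distribution of $Y$ on $\mathbb{R}^n$. Partition $X=[X_1:X_2]$ and $\beta=(\beta_1',\beta_2')'$ commensurably, with $X_i$ having $k_i\ge1$ columns ($k_1+k_2=k$). The restricted least squares estimator is $\hat\beta(R)=\big(((X_1'X_1)^{-1}X_1'Y)',0_{1\times k_2}\big)'$ and the unrestricted one is $\hat\beta(U)=(X'X)^{-1}X'Y$. For a tuning parameter $\alpha>0$ the model averaging estimator is $\tilde\beta=\hat\lambda\hat\beta(R)+(1-\hat\lambda)\hat\beta(U)$ with $\hat\lambda=\big[1+\exp(-2\alpha k_2)\exp(\alpha\|X\hat\beta(R)-X\hat\beta(U)\|^2/\sigma^2)\big]^{-1}$ ($\|\cdot\|$ Euclidean norm). $P_R=X_1(X_1'X_1)^{-1}X_1'$. For a symmetric positive definite $A$, $A^{1/2}$ is its symmetric positive definite square root and $A^{-1/2}=(A^{1/2})^{-1}$. *)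

theory Defs
  imports "HOL-Analysis.Analysis" "HOL-Probability.Probability"
begin

definition sym_pos_def :: "real^'k^'k \<Rightarrow> bool" where
  "sym_pos_def A \<longleftrightarrow> transpose A = A \<and> (\<forall>x. x \<noteq> 0 \<longrightarrow> x \<bullet> (A *v x) > 0)"

definition matrix_sqrt :: "real^'k^'k \<Rightarrow> real^'k^'k" where
  "matrix_sqrt A = (THE S. sym_pos_def S \<and> S ** S = A)"

definition matrix_sqrt_inv :: "real^'k^'k \<Rightarrow> real^'k^'k" where
  "matrix_sqrt_inv A = matrix_inv (matrix_sqrt A)"

definition Xfst :: "real^('k1::finite+'k2::finite)^'n \<Rightarrow> real^'k1^'n" where
  "Xfst X = (\<chi> i j. X $ i $ Inl j)"

definition Xsnd :: "real^('k1::finite+'k2::finite)^'n \<Rightarrow> real^'k2^'n" where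
  "Xsnd X = (\<chi> i j. X $ i $ Inr j)"

definition vfst :: "real^('k1::finite+'k2::finite) \<Rightarrow> real^'k1" where
  "vfst b = (\<chi> j. b $ Inl j)"

definition vsnd :: "real^('k1::finite+'k2::finite) \<Rightarrow> real^'k2" where
  "vsnd b = (\<chi> j. b $ Inr j)"

definition vjoin :: "real^'k1 \<Rightarrow> real^'k2 \<Rightarrow> real^('k1::finite+'k2::finite)" where
  "vjoin a b = (\<chi> i. case i of Inl j \<Rightarrow> a $ j | Inr j \<Rightarrow> b $ j)"

definition betaR :: "real^('k1::finite+'k2::finite)^'n \<Rightarrow> real^'n \<Rightarrow> real^('k1::finite+'k2::finite)" where
  "betaR X Y = vjoin (matrix_inv (transpose (Xfst X) ** Xfst X) *v (transpose (Xfst X) *v Y))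
                     (0 :: real^'k2)"

definition betaU :: "real^('k1::finite+'k2::finite)^'n \<Rightarrow> real^'n \<Rightarrow> real^('k1::finite+'k2::finite)" where
  "betaU X Y = matrix_inv (transpose X ** X) *v (transpose X *v Y)"

definition lambda_hat :: "real \<Rightarrow> real \<Rightarrow> real^('k1::finite+'k2::finite)^'n \<Rightarrow> real^'n \<Rightarrow> real" where
  "lambda_hat \<alpha> \<sigma> X Y =
     1 / (1 + exp (- 2 * \<alpha> * real CARD('k2))
            * exp (\<alpha> * (norm (X *v betaR X Y - X *v betaU X Y))\<^sup>2 / \<sigma>\<^sup>2))"

definition beta_tilde :: "real \<Rightarrow> real \<Rightarrow> real^('k1::finite+'k2::finite)^'n \<Rightarrow> real^'n \<Rightarrow> real^('k1::finite+'k2::finite)" where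
  "beta_tilde \<alpha> \<sigma> X Y =
     lambda_hat \<alpha> \<sigma> X Y *\<^sub>R betaR X Y + (1 - lambda_hat \<alpha> \<sigma> X Y) *\<^sub>R betaU X Y"

definition proj_R :: "real^('k1::finite+'k2::finite)^'n \<Rightarrow> real^'n^'n" where
  "proj_R X = Xfst X ** matrix_inv (transpose (Xfst X) ** Xfst X) ** transpose (Xfst X)"

definition M22 :: "real^('k1::finite+'k2::finite)^'n \<Rightarrow> real^'k2^'k2" where
  "M22 X = transpose (Xsnd X) ** (mat 1 - proj_R X) ** Xsnd X"

definition G12 :: "real^('k1::finite+'k2::finite)^'n \<Rightarrow> real^'k2^'k1" where
  "G12 X = matrix_inv (transpose (Xfst X) ** Xfst X) ** transpose (Xfst X) ** Xsnd X"

definition Bn :: "real^('k1::finite+'k2::finite)^'n \<Rightarrow> real^'k2^('k1::finite+'k2::finite)" where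
  "Bn X = (\<chi> i. case i of Inl j \<Rightarrow> G12 X $ j | Inr j \<Rightarrow> - (mat 1 $ j))"

definition Cn :: "real^('k1::finite+'k2::finite)^'n \<Rightarrow> real^'k1^('k1::finite+'k2::finite)" where
  "Cn X = (\<chi> i. case i of Inl j \<Rightarrow> matrix_sqrt_inv (transpose (Xfst X) ** Xfst X) $ j
                         | Inr j \<Rightarrow> 0)"

definition Dn :: "real^('k1::finite+'k2::finite)^'n \<Rightarrow> real^'k2^('k1::finite+'k2::finite)" where
  "Dn X = (\<chi> i. case i of Inl j \<Rightarrow> (- (G12 X ** matrix_sqrt_inv (M22 X))) $ j
                         | Inr j \<Rightarrow> matrix_sqrt_inv (M22 X) $ j)"

text \<open>N(0, sigma^2 I): independent centred normal components with standard deviation sigma.\<close>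
definition gauss_vec :: "real \<Rightarrow> (real^'a) measure" where
  "gauss_vec \<sigma> = density lborel (\<lambda>z. \<Prod>i\<in>UNIV. normal_density 0 \<sigma> (z $ i))"

definition model_dist :: "real^('k1::finite+'k2::finite)^'n \<Rightarrow> real^('k1::finite+'k2::finite) \<Rightarrow> real \<Rightarrow> (real^'n) measure" where
  "model_dist X \<beta> \<sigma> = distr (gauss_vec \<sigma>) borel (\<lambda>u. X *v \<beta> + u)"

end

theory Submission
  imports Defs
begin

text \<open>
Write Y = X beta + u. The restricted and the unrestricted estimator are affine in the noise u,
and their errors depend on u only through Z1 = (X1'X1)^(-1/2) X1'u and
Z2 = (X2'(I - P_R)X2)^(-1/2) X2'(I - P_R)u. So does the weight, because the squared distance
between the two fitted values equals |Z2 + (X2'(I - P_R)X2)^(1/2) beta2|^2. Hence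
sqrt n (beta_tilde - beta) is a fixed function of (Z1, Z2).

The map u -> (Z1, Z2) has orthonormal rows, and a linear map L with L L' = I carries
N(0, sigma^2 I) to N(0, sigma^2 I): the orthogonal map (x, y) -> (x - L'Lx + L'y, Lx) of the
product space preserves the isotropic normal law, since Lebesgue measure is rotation invariant,
and its second component is L x. The two displayed forms agree because
1/(1 + e^a e^(-b)) = 1 - 1/(1 + e^(-a) e^b).
\<close>

(* Keep transpose A *v x in this form; by default it is rewritten to x v* A. *)
declare transpose_matrix_vector [simp del]

lemma inner_matrix_vector_transpose: "(A *v x) \<bullet> y = x \<bullet> (transpose A *v y)"
  for A :: "real^'n^'m"
  by (metis transpose_matrix_vector dot_lmul_matrix inner_commute)

lemma uminus_matrix_vector_mult: "(- A) *v x = - (A *v x)"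
  for A :: "real^'n^'m"
  by (simp add: vec_eq_iff matrix_vector_mult_def sum_negf)

lemma inj_matrix_vector_mult_iff: "inj ((*v) A) \<longleftrightarrow> (\<forall>x. A *v x = 0 \<longrightarrow> x = 0)"
  for A :: "real^'n^'m"
  by (simp add: matrix_left_invertible_injective[symmetric] matrix_left_invertible_ker)

lemma symmetric_matrix_self_adjoint: "transpose A = A \<Longrightarrow> (A *v x) \<bullet> y = x \<bullet> (A *v y)"
  for A :: "real^'n^'n"
  by (metis inner_matrix_vector_transpose)

lemma symmetric_matrixI:
  fixes A :: "real^'n^'n"
  assumes "\<And>x y. (A *v x) \<bullet> y = x \<bullet> (A *v y)"
  shows "transpose A = A"
proof -
  have "x \<bullet> (transpose A *v y - A *v y) = 0" for x y
    using assms[of x y] inner_matrix_vector_transpose[of A x y] by (simp add: inner_diff_right)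
  then show ?thesis
    by (simp add: matrix_eq) (metis inner_eq_zero_iff eq_iff_diff_eq_0)
qed

lemma matrix_inv_left: "invertible A \<Longrightarrow> matrix_inv A ** A = mat 1"
  and matrix_inv_right: "invertible A \<Longrightarrow> A ** matrix_inv A = mat 1"
  for A :: "real^'n^'n"
proof -
  assume "invertible A"
  then have "A ** matrix_inv A = mat 1 \<and> matrix_inv A ** A = mat 1"
    unfolding invertible_def matrix_inv_def by (rule someI_ex)
  then show "matrix_inv A ** A = mat 1" "A ** matrix_inv A = mat 1"
    by simp_all
qed

lemma sym_pos_gram:
  fixes A :: "real^'m^'n"
  assumes "inj ((*v) A)"
  shows "sym_pos_def (transpose A ** A)"
  unfolding sym_pos_def_def
proof (intro conjI allI impI)
  show "transpose (transpose A ** A) = transpose A ** A"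
    by (simp add: matrix_transpose_mul)
  fix x :: "real^'m" assume "x \<noteq> 0"
  then have "A *v x \<noteq> 0"
    using assms by (metis injD matrix_vector_mult_0_right)
  then show "0 < x \<bullet> ((transpose A ** A) *v x)"
    using inner_matrix_vector_transpose[of A x "A *v x", symmetric]
    by (simp flip: matrix_vector_mul_assoc)
qed

lemma borel_measurable_linear:
  fixes f :: "'a::euclidean_space \<Rightarrow> 'b::euclidean_space"
  assumes "linear f"
  shows "f \<in> borel_measurable borel"
  using assms by (intro borel_measurable_continuous_onI linear_continuous_on)
    (simp add: linear_conv_bounded_linear)

lemma continuous_on_matrix_vector_mult [continuous_intros]:
  fixes A :: "real^'n^'m"
  shows "continuous_on S f \<Longrightarrow> continuous_on S (\<lambda>x. A *v f x)"
  by (rule continuous_on_compose2[OF matrix_vector_mult_linear_continuous_on[of UNIV A]]) auto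

section \<open>Rotation invariance of Lebesgue measure\<close>

(* The library proves rotation invariance of Lebesgue measure only on real^'n for a well-ordered
   finite type 'n. Coordinates indexed by the basis vectors of an arbitrary Euclidean space
   transfer it there. *)
typedef (overloaded) ('a::euclidean_space) basis_index = "Basis :: 'a set"
  using nonempty_Basis by blast

lemma UNIV_basis_index: "(UNIV :: 'a::euclidean_space basis_index set) = Abs_basis_index ` Basis"
  using type_definition.Abs_image[OF type_definition_basis_index] by (rule sym)

instance basis_index :: (euclidean_space) finite
  by standard (simp add: UNIV_basis_index)

instantiation basis_index :: (euclidean_space) wellorder
begin

definition less_eq_basis_index :: "'a basis_index \<Rightarrow> 'a basis_index \<Rightarrow> bool"
  where "less_eq_basis_index x y \<longleftrightarrow> to_nat x \<le> to_nat y"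

definition less_basis_index :: "'a basis_index \<Rightarrow> 'a basis_index \<Rightarrow> bool"
  where "less_basis_index x y \<longleftrightarrow> to_nat x < to_nat y"

instance
proof
  fix x y z :: "'a basis_index"
  show "x < y \<longleftrightarrow> x \<le> y \<and> \<not> y \<le> x" "x \<le> x" "x \<le> y \<or> y \<le> x"
    by (auto simp: less_eq_basis_index_def less_basis_index_def)
  show "x \<le> y \<Longrightarrow> y \<le> z \<Longrightarrow> x \<le> z"
    by (simp add: less_eq_basis_index_def)
  show "x \<le> y \<Longrightarrow> y \<le> x \<Longrightarrow> x = y"
    unfolding less_eq_basis_index_def by (metis le_antisym to_nat_split)
next
  fix P :: "'a basis_index \<Rightarrow> bool" and a
  assume "\<And>x. (\<And>y. y < x \<Longrightarrow> P y) \<Longrightarrow> P x"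
  then show "P a"
    by (induction "to_nat a" arbitrary: a rule: less_induct) (metis less_basis_index_def)
qed

end

lemma lborel_orthogonal_invariant_cart:
  fixes T :: "real^'n::{finite,wellorder} \<Rightarrow> real^'n::_"
  assumes T: "orthogonal_transformation T"
  shows "distr lborel borel T = lborel"
proof (rule lborel_eqI[symmetric])
  fix l u :: "real^'n::_" assume lu: "\<And>b. b \<in> Basis \<Longrightarrow> l \<bullet> b \<le> u \<bullet> b"
  have T_meas: "T \<in> borel_measurable borel"
    using T by (simp add: orthogonal_transformation_linear borel_measurable_linear)
  have Tinv: "orthogonal_transformation (inv T)"
    using T by (rule orthogonal_transformation_inv)
  have preimage: "T -` box l u = inv T ` box l u"
    using orthogonal_transformation_bij[OF T] by (simp add: bij_vimage_eq_inv_image)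
  have "emeasure (distr lborel borel T) (box l u) = emeasure lebesgue (inv T ` box l u)"
    using T_meas
    by (simp add: emeasure_distr sets_completionI_sets measurable_sets_borel flip: preimage)
  also have "\<dots> = emeasure lebesgue (box l u)"
    using measurable_orthogonal_image[OF Tinv lmeasurable_box]
      measure_orthogonal_image[OF Tinv lmeasurable_box]
    by (simp add: emeasure_eq_measure2)
  also have "\<dots> = (\<Prod>b\<in>Basis. (u - l) \<bullet> b)"
    using lu by (simp add: sets_completionI_sets)
  finally show "emeasure (distr lborel borel T) (box l u) = (\<Prod>b\<in>Basis. (u - l) \<bullet> b)" .
qed simp

lemma distr_lborel_isometry_Basis:
  fixes J :: "'b::euclidean_space \<Rightarrow> 'a::euclidean_space"
  assumes lin: "linear J" and iso: "\<And>x y. J x \<bullet> J y = x \<bullet> y" and Basis: "J ` Basis = Basis"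
  shows "distr lborel borel J = lborel"
proof (rule lborel_eqI[symmetric])
  fix l u :: 'a assume lu: "\<And>b. b \<in> Basis \<Longrightarrow> l \<bullet> b \<le> u \<bullet> b"
  define pull where "pull y = (\<Sum>b\<in>Basis. (y \<bullet> J b) *\<^sub>R b)" for y
  have pull: "pull y \<bullet> b = y \<bullet> J b" if "b \<in> Basis" for y b
    using that by (simp add: pull_def inner_sum_left inner_Basis if_distrib[where f="\<lambda>x. _ * x"]
        cong: if_cong)
  have all_Basis: "(\<forall>c\<in>Basis. P c) \<longleftrightarrow> (\<forall>b\<in>Basis. P (J b))" for P
    by (subst Basis[symmetric]) simp
  have preimage: "J -` box l u = box (pull l) (pull u)"
    by (auto simp: box_def all_Basis iso pull)
  have inj: "inj_on J Basis"
    by (rule inj_onI) (metis inner_Basis iso zero_neq_one)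
  have "emeasure (distr lborel borel J) (box l u) = emeasure lborel (box (pull l) (pull u))"
    using lin by (simp add: emeasure_distr borel_measurable_linear flip: preimage)
  also have "\<dots> = (\<Prod>b\<in>Basis. (u - l) \<bullet> J b)"
    using lu by (simp add: pull inner_diff_left Basis[symmetric])
  also have "\<dots> = (\<Prod>c\<in>Basis. (u - l) \<bullet> c)"
    using prod.reindex[OF inj, of "\<lambda>c. (u - l) \<bullet> c"] by (simp add: Basis)
  finally show "emeasure (distr lborel borel J) (box l u) = (\<Prod>b\<in>Basis. (u - l) \<bullet> b)" .
qed simp

definition basis_coords :: "real^('a::euclidean_space basis_index) \<Rightarrow> 'a" where
  "basis_coords v = (\<Sum>i\<in>UNIV. v $ i *\<^sub>R Rep_basis_index i)"

lemma inj_on_Abs_basis_index: "inj_on Abs_basis_index Basis"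
  by (rule inj_onI) (simp add: Abs_basis_index_inject)

lemma basis_coords_eq: "basis_coords v = (\<Sum>b\<in>Basis. v $ Abs_basis_index b *\<^sub>R b)"
  by (simp add: basis_coords_def UNIV_basis_index sum.reindex[OF inj_on_Abs_basis_index]
      Abs_basis_index_inverse)

lemma inner_basis_coords_Basis: "b \<in> Basis \<Longrightarrow> basis_coords v \<bullet> b = v $ Abs_basis_index b"
  by (simp add: basis_coords_eq inner_sum_left inner_Basis if_distrib[where f="\<lambda>x. _ * x"]
      cong: if_cong)

lemma linear_basis_coords: "linear basis_coords"
  by (rule linearI) (simp_all add: basis_coords_def sum.distrib scaleR_add_left scaleR_sum_right)

lemma inner_basis_coords: "basis_coords v \<bullet> basis_coords w = v \<bullet> w"
proof -
  have "(\<Sum>b\<in>Basis. v $ Abs_basis_index b * w $ Abs_basis_index b) = v \<bullet> w"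
    by (simp add: inner_vec_def UNIV_basis_index sum.reindex[OF inj_on_Abs_basis_index])
  then show ?thesis
    by (subst euclidean_inner) (simp add: inner_basis_coords_Basis)
qed

lemma basis_coords_Basis: "basis_coords ` Basis = Basis"
proof -
  have "basis_coords (axis i 1) = Rep_basis_index i" for i :: "'a basis_index"
    by (simp add: basis_coords_def axis_def if_distrib[where f="\<lambda>x. x *\<^sub>R _"] cong: if_cong)
  then show ?thesis
    by (simp add: Basis_vec_def image_UN UNION_singleton_eq_range image_image
        type_definition.Rep_range[OF type_definition_basis_index])
qed

lemma basis_coords_inverse: "basis_coords (\<chi> i. x \<bullet> Rep_basis_index i) = x"
  by (simp add: basis_coords_eq Abs_basis_index_inverse euclidean_representation)

lemma lborel_orthogonal_invariant:
  fixes T :: "'a::euclidean_space \<Rightarrow> 'a"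
  assumes T: "orthogonal_transformation T"
  shows "distr lborel borel T = lborel"
proof -
  let ?J = "basis_coords :: real^('a basis_index) \<Rightarrow> 'a"
  define coords :: "'a \<Rightarrow> real^('a basis_index)" where "coords x = (\<chi> i. x \<bullet> Rep_basis_index i)"
      for x
  have J_coords: "?J (coords x) = x" for x
    by (simp add: coords_def basis_coords_inverse)
  have norm_J: "norm (?J v) = norm v" for v
    by (simp add: norm_eq_sqrt_inner inner_basis_coords)
  have lin_coords: "linear coords"
    by (rule linearI) (simp_all add: coords_def vec_eq_iff inner_add_left)
  have lin_T: "linear T"
    using T by (rule orthogonal_transformation_linear)
  define T' where "T' = coords \<circ> T \<circ> ?J"
  have lin_T': "linear T'"
    unfolding T'_def by (intro linear_compose[OF linear_basis_coords] linear_compose[OF lin_T]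
        lin_coords)
  have "orthogonal_transformation T'"
    unfolding orthogonal_transformation
  proof (intro conjI allI lin_T')
    fix v
    have "norm (T' v) = norm (?J (T' v))" by (simp add: norm_J)
    also have "\<dots> = norm v"
      by (simp add: T'_def J_coords orthogonal_transformation_norm[OF T] norm_J)
    finally show "norm (T' v) = norm v" .
  qed
  then have T'_inv: "distr lborel borel T' = lborel"
    by (rule lborel_orthogonal_invariant_cart)
  have J_lborel: "distr lborel borel ?J = lborel"
    by (rule distr_lborel_isometry_Basis[OF linear_basis_coords inner_basis_coords
        basis_coords_Basis])
  have meas_J: "?J \<in> borel_measurable borel" and meas_T: "T \<in> borel_measurable borel"
    and meas_T': "T' \<in> borel_measurable borel"
    using linear_basis_coords lin_T lin_T' by (blast intro: borel_measurable_linear)+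
  have "distr lborel borel T = distr (distr lborel borel ?J) borel T"
    by (simp add: J_lborel)
  also have "\<dots> = distr lborel borel (T \<circ> ?J)"
    using meas_J meas_T by (simp add: distr_distr)
  also have "T \<circ> ?J = ?J \<circ> T'"
    by (simp add: T'_def fun_eq_iff J_coords)
  also have "distr lborel borel (?J \<circ> T') = distr (distr lborel borel T') borel ?J"
    using meas_J meas_T' by (simp add: distr_distr)
  also have "\<dots> = lborel"
    by (simp add: T'_inv J_lborel)
  finally show ?thesis .
qed

section \<open>Isotropic normal distributions\<close>

definition iso_normal_density :: "real \<Rightarrow> 'a::euclidean_space \<Rightarrow> real" where
  "iso_normal_density \<sigma> x = (1 / sqrt (2 * pi * \<sigma>\<^sup>2)) ^ DIM('a) * exp (- (norm x)\<^sup>2 / (2 * \<sigma>\<^sup>2))"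

lemma borel_measurable_iso_normal_density[measurable]:
  "iso_normal_density \<sigma> \<in> borel_measurable borel"
  unfolding iso_normal_density_def by measurable

lemma iso_normal_density_nonneg: "iso_normal_density \<sigma> x \<ge> 0"
  by (simp add: iso_normal_density_def)

lemma iso_normal_density_eq_prod:
  "iso_normal_density \<sigma> (x :: 'a::euclidean_space) = (\<Prod>b\<in>Basis. normal_density 0 \<sigma> (x \<bullet> b))"
proof -
  have "(norm x)\<^sup>2 = (\<Sum>b\<in>Basis. (x \<bullet> b)\<^sup>2)"
    by (subst power2_norm_eq_inner) (simp add: euclidean_inner[of x x] power2_eq_square)
  then have "exp (- (norm x)\<^sup>2 / (2 * \<sigma>\<^sup>2)) = (\<Prod>b\<in>Basis. exp (- (x \<bullet> b)\<^sup>2 / (2 * \<sigma>\<^sup>2)))"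
    by (simp add: exp_sum[symmetric] sum_negf sum_divide_distrib)
  then show ?thesis
    unfolding iso_normal_density_def normal_density_def diff_zero prod.distrib prod_constant
    by simp
qed

lemma gauss_vec_eq_density:
  "(gauss_vec \<sigma> :: (real^'n) measure) = density lborel (\<lambda>x. ennreal (iso_normal_density \<sigma> x))"
proof -
  have "inj (\<lambda>i::'n. axis i (1::real))"
    by (auto simp: inj_def axis_eq_axis)
  then have "(\<Prod>i\<in>UNIV. normal_density 0 \<sigma> (x $ i)) = iso_normal_density \<sigma> x" for x :: "real^'n"
    by (simp add: iso_normal_density_eq_prod Basis_vec_def UNION_singleton_eq_range prod.reindex
        cart_eq_inner_axis)
  then show ?thesis
    by (simp add: gauss_vec_def)
qed

lemma prob_space_iso_normal:
  assumes "\<sigma> > 0"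
  shows "prob_space (density lborel (\<lambda>x::'a::euclidean_space. ennreal (iso_normal_density \<sigma> x)))"
proof
  have "emeasure (density lborel (\<lambda>x::'a. ennreal (iso_normal_density \<sigma> x))) UNIV
      = (\<integral>\<^sup>+x. (\<Prod>b\<in>Basis. ennreal (normal_density 0 \<sigma> (x \<bullet> b))) \<partial>(lborel :: 'a measure))"
    by (simp add: emeasure_density iso_normal_density_eq_prod prod_ennreal normal_density_nonneg)
  also have "\<dots> = (\<Prod>b\<in>(Basis :: 'a set). \<integral>\<^sup>+x. ennreal (normal_density 0 \<sigma> x) \<partial>lborel)"
    by (rule nn_integral_lborel_prod) auto
  also have "(\<integral>\<^sup>+x. ennreal (normal_density 0 \<sigma> x) \<partial>lborel) = 1"
    using assms by (subst nn_integral_eq_integral)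
      (auto simp: integrable_normal_density integral_normal_density)
  finally show "emeasure (density lborel (\<lambda>x::'a. ennreal (iso_normal_density \<sigma> x)))
      (space (density lborel (\<lambda>x::'a. ennreal (iso_normal_density \<sigma> x)))) = 1"
    by simp
qed

lemma iso_normal_density_Pair:
  "iso_normal_density \<sigma> (x, y) = iso_normal_density \<sigma> x * iso_normal_density \<sigma> y"
proof -
  have "- (norm (x, y))\<^sup>2 / (2 * \<sigma>\<^sup>2) = - (norm x)\<^sup>2 / (2 * \<sigma>\<^sup>2) + - (norm y)\<^sup>2 / (2 * \<sigma>\<^sup>2)"
    by (simp add: norm_Pair add_divide_distrib diff_divide_distrib)
  then have "exp (- (norm (x, y))\<^sup>2 / (2 * \<sigma>\<^sup>2))
      = exp (- (norm x)\<^sup>2 / (2 * \<sigma>\<^sup>2)) * exp (- (norm y)\<^sup>2 / (2 * \<sigma>\<^sup>2))"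
    by (simp only: exp_add)
  then show ?thesis
    by (simp add: iso_normal_density_def power_add exp_add mult_ac)
qed

lemma iso_normal_pair_measure:
  assumes "\<sigma> > 0"
  shows "density lborel (\<lambda>x::'a::euclidean_space. ennreal (iso_normal_density \<sigma> x))
      \<Otimes>\<^sub>M density lborel (\<lambda>y::'b::euclidean_space. ennreal (iso_normal_density \<sigma> y))
    = density lborel (\<lambda>z. ennreal (iso_normal_density \<sigma> z))"
proof -
  interpret Db: prob_space "density lborel (\<lambda>y::'b. ennreal (iso_normal_density \<sigma> y))"
    using assms by (rule prob_space_iso_normal)
  have "density lborel (\<lambda>x::'a. ennreal (iso_normal_density \<sigma> x))
      \<Otimes>\<^sub>M density lborel (\<lambda>y::'b. ennreal (iso_normal_density \<sigma> y))
    = density (lborel \<Otimes>\<^sub>M lborel) (\<lambda>(x, y). ennreal (iso_normal_density \<sigma> x) * ennreal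
        (iso_normal_density \<sigma> y))"
    by (rule pair_measure_density) (auto simp: Db.sigma_finite_measure_axioms
        lborel.sigma_finite_measure_axioms)
  also have "\<dots> = density lborel (\<lambda>z. ennreal (iso_normal_density \<sigma> z))"
  proof -
    have "(\<lambda>(x, y). ennreal (iso_normal_density \<sigma> x) * ennreal (iso_normal_density \<sigma> y))
        = (\<lambda>z :: 'a \<times> 'b. ennreal (iso_normal_density \<sigma> z))"
      by (auto simp: fun_eq_iff iso_normal_density_Pair ennreal_mult iso_normal_density_nonneg)
    then show ?thesis
      by (simp add: lborel_prod)
  qed
  finally show ?thesis .
qed

lemma distr_iso_normal_orthogonal:
  fixes T :: "'a::euclidean_space \<Rightarrow> 'a"
  assumes T: "orthogonal_transformation T"
  shows "distr (density lborel (\<lambda>x. ennreal (iso_normal_density \<sigma> x))) borel T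
    = density lborel (\<lambda>x. ennreal (iso_normal_density \<sigma> x))"
proof -
  have "T \<in> borel_measurable borel"
    using T by (simp add: borel_measurable_linear orthogonal_transformation_linear)
  moreover have "iso_normal_density \<sigma> (T x) = iso_normal_density \<sigma> x" for x
    using T by (simp add: iso_normal_density_def orthogonal_transformation_norm)
  ultimately show ?thesis
    using density_distr[of "\<lambda>x. ennreal (iso_normal_density \<sigma> x)" borel T lborel]
    by (simp add: lborel_orthogonal_invariant[OF T])
qed

lemma (in prob_space) distr_pair_snd:
  assumes "sigma_finite_measure N"
  shows "distr (M \<Otimes>\<^sub>M N) N snd = N"
proof (intro measure_eqI)
  interpret N: sigma_finite_measure N by fact
  fix A assume A: "A \<in> sets (distr (M \<Otimes>\<^sub>M N) N snd)"
  then have "emeasure (distr (M \<Otimes>\<^sub>M N) N snd) A = emeasure (M \<Otimes>\<^sub>M N) (space M \<times> A)"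
    by (auto simp: emeasure_distr space_pair_measure dest: sets.sets_into_space
        intro!: arg_cong2[where f=emeasure])
  with A show "emeasure (distr (M \<Otimes>\<^sub>M N) N snd) A = emeasure N A"
    by (simp add: N.emeasure_pair_measure_Times emeasure_space_1)
qed simp

lemma orthogonal_transformation_coisometry_extension:
  fixes L :: "'a::euclidean_space \<Rightarrow> 'b::euclidean_space"
  assumes L: "linear L" and coiso: "\<And>y. L (adjoint L y) = y"
  shows "orthogonal_transformation (\<lambda>(x, y). (x - adjoint L (L x) + adjoint L y, L x))"
  unfolding orthogonal_transformation
proof (intro conjI allI)
  show "linear (\<lambda>(x, y). (x - adjoint L (L x) + adjoint L y, L x))"
    using L adjoint_linear[OF L]
    by (intro linearI) (auto simp: linear_add linear_scale linear_diff algebra_simps)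
  have adj: "x \<bullet> adjoint L y = L x \<bullet> y" "adjoint L y \<bullet> x = y \<bullet> L x" for x y
    by (simp_all add: adjoint_clauses[OF L])
  fix p :: "'a \<times> 'b"
  obtain x y where p: "p = (x, y)"
    by (cases p)
  have "(x - adjoint L (L x) + adjoint L y, L x) \<bullet> (x - adjoint L (L x) + adjoint L y, L x) = p \<bullet> p"
    by (simp add: p inner_add_left inner_add_right inner_diff_left inner_diff_right adj coiso
        inner_commute algebra_simps)
  then show "norm ((\<lambda>(x, y). (x - adjoint L (L x) + adjoint L y, L x)) p) = norm p"
    by (simp add: p norm_eq_sqrt_inner)
qed

lemma distr_iso_normal_coisometry:
  fixes L :: "'a::euclidean_space \<Rightarrow> 'b::euclidean_space"
  assumes \<sigma>: "\<sigma> > 0" and L: "linear L" and coiso: "\<And>y. L (adjoint L y) = y"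
  shows "distr (density lborel (\<lambda>x. ennreal (iso_normal_density \<sigma> x))) borel L
    = density lborel (\<lambda>y. ennreal (iso_normal_density \<sigma> y))"
proof -
  define Da where "Da = density lborel (\<lambda>x::'a. ennreal (iso_normal_density \<sigma> x))"
  define Db where "Db = density lborel (\<lambda>y::'b. ennreal (iso_normal_density \<sigma> y))"
  interpret Da: prob_space Da
    unfolding Da_def using \<sigma> by (rule prob_space_iso_normal)
  interpret Db: prob_space Db
    unfolding Db_def using \<sigma> by (rule prob_space_iso_normal)
  define R where "R = (\<lambda>(x, y). (x - adjoint L (L x) + adjoint L y, L x))"
  have R: "orthogonal_transformation R"
    unfolding R_def using L coiso by (rule orthogonal_transformation_coisometry_extension)
  then have R_inv: "distr (Da \<Otimes>\<^sub>M Db) borel R = Da \<Otimes>\<^sub>M Db"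
    unfolding Da_def Db_def iso_normal_pair_measure[OF \<sigma>] by (rule distr_iso_normal_orthogonal)
  have "sets (Da \<Otimes>\<^sub>M Db) = sets borel"
    unfolding Da_def Db_def iso_normal_pair_measure[OF \<sigma>] by simp
  then have meas_R: "R \<in> borel_measurable (Da \<Otimes>\<^sub>M Db)"
    using borel_measurable_linear[OF orthogonal_transformation_linear[OF R]] measurable_cong_sets
    by metis
  have meas_snd: "snd \<in> borel_measurable (borel :: ('a \<times> 'b) measure)"
    by (rule borel_measurable_linear[OF bounded_linear.linear[OF bounded_linear_snd]])
  have "distr Da borel L = distr (distr (Da \<Otimes>\<^sub>M Db) Da fst) borel L"
    by (simp add: Db.distr_pair_fst)
  also have "\<dots> = distr (Da \<Otimes>\<^sub>M Db) borel (snd \<circ> R)"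
    using L by (simp add: distr_distr borel_measurable_linear Da_def R_def o_def case_prod_beta')
  also have "\<dots> = distr (distr (Da \<Otimes>\<^sub>M Db) borel R) borel snd"
    using meas_R meas_snd by (simp add: distr_distr)
  also have "\<dots> = distr (Da \<Otimes>\<^sub>M Db) Db snd"
    unfolding R_inv by (rule distr_cong) (simp_all add: Db_def)
  also have "\<dots> = Db"
    by (rule Da.distr_pair_snd) (rule Db.sigma_finite_measure_axioms)
  finally show ?thesis
    unfolding Da_def Db_def .
qed

lemma gauss_vec_orthonormal_rows:
  fixes A :: "real^'n^'k1" and B :: "real^'n^'k2"
  assumes \<sigma>: "\<sigma> > 0"
    and A: "A ** transpose A = mat 1" and B: "B ** transpose B = mat 1"
    and AB: "A ** transpose B = 0"
  shows "distr (gauss_vec \<sigma>) borel (\<lambda>u. (A *v u, B *v u)) = gauss_vec \<sigma> \<Otimes>\<^sub>M gauss_vec \<sigma>"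
proof -
  let ?L = "\<lambda>u. (A *v u, B *v u)"
  have lin: "linear ?L"
    by (intro linearI) (simp_all add: matrix_vector_right_distrib matrix_vector_mult_scaleR)
  have adj: "adjoint ?L = (\<lambda>(w1, w2). transpose A *v w1 + transpose B *v w2)"
    by (rule adjoint_unique) (simp add: inner_matrix_vector_transpose inner_add_right)
  have BA: "B ** transpose A = 0"
    using arg_cong[where f=transpose, OF AB]
    by (simp add: matrix_transpose_mul) (simp add: transpose_def vec_eq_iff)
  have "?L (adjoint ?L w) = w" for w
    by (cases w) (simp add: adj matrix_vector_right_distrib matrix_vector_mul_assoc A B AB BA)
  then show ?thesis
    using distr_iso_normal_coisometry[OF \<sigma> lin]
    by (simp add: gauss_vec_eq_density iso_normal_pair_measure[OF \<sigma>])
qed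

section \<open>Spectral theorem and matrix square roots\<close>

lemma self_adjoint_psd_kernel:
  fixes g :: "'a::euclidean_space \<Rightarrow> 'a"
  assumes lin: "linear g" and sa: "\<And>x y. g x \<bullet> y = x \<bullet> g y"
    and S: "subspace S" and inv: "\<And>x. x \<in> S \<Longrightarrow> g x \<in> S"
    and psd: "\<And>x. x \<in> S \<Longrightarrow> 0 \<le> x \<bullet> g x"
    and v: "v \<in> S" and zero: "v \<bullet> g v = 0"
  shows "g v = 0"
proof (rule ccontr)
  define w where "w = g v"
  define c where "c = w \<bullet> g w"
  assume "g v \<noteq> 0"
  then have ww: "w \<bullet> w > 0"
    by (simp add: w_def)
  have c: "c \<ge> 0"
    using psd inv v by (simp add: c_def w_def)
  \<comment> \<open>Along the line \<open>v - s w\<close> the form equals \<open>s (s c - 2 (w \<bullet> w))\<close>,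
    which is negative for small \<open>s > 0\<close>.\<close>
  define s where "s = (w \<bullet> w) / (c + 1)"
  have s: "s > 0" "s * c < w \<bullet> w"
    using ww c by (simp_all add: s_def field_simps)
  have "v - s *\<^sub>R w \<in> S"
    using S v inv by (simp add: w_def subspace_diff subspace_scale)
  then have "0 \<le> (v - s *\<^sub>R w) \<bullet> g (v - s *\<^sub>R w)"
    by (rule psd)
  also have "\<dots> = s * (s * c - 2 * (w \<bullet> w))"
    using sa[of v w] zero lin
    by (simp add: w_def c_def linear_diff linear_scale inner_diff_left inner_diff_right
        inner_commute algebra_simps)
  finally show False
    using s ww by (simp add: zero_le_mult_iff)
qed

lemma self_adjoint_eigenvector_in_subspace:
  fixes f :: "'a::euclidean_space \<Rightarrow> 'a"
  assumes lin: "linear f" and sa: "\<And>x y. f x \<bullet> y = x \<bullet> f y"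
    and S: "subspace S" and inv: "\<And>x. x \<in> S \<Longrightarrow> f x \<in> S"
    and x0: "x0 \<in> S" "x0 \<noteq> 0"
  obtains v where "v \<in> S" "norm v = 1" "f v = (v \<bullet> f v) *\<^sub>R v"
proof -
  \<comment> \<open>A maximiser of the Rayleigh quotient on the unit sphere of \<open>S\<close> is an eigenvector.\<close>
  define K where "K = S \<inter> sphere 0 1"
  have "compact K"
    unfolding K_def by (simp add: closed_Int_compact closed_subspace S)
  moreover have "(1 / norm x0) *\<^sub>R x0 \<in> K"
    using x0 S by (simp add: K_def subspace_scale)
  moreover have "continuous_on K (\<lambda>x. x \<bullet> f x)"
    using lin
    by (intro continuous_intros linear_continuous_on) (simp add: linear_conv_bounded_linear)
  ultimately obtain v where v: "v \<in> K" and max: "\<And>y. y \<in> K \<Longrightarrow> y \<bullet> f y \<le> v \<bullet> f v"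
    using continuous_attains_sup[of K "\<lambda>x. x \<bullet> f x"] by blast
  define l where "l = v \<bullet> f v"
  have vS: "v \<in> S" and nv: "norm v = 1"
    using v by (auto simp: K_def)
  have bound: "x \<bullet> f x \<le> l * (x \<bullet> x)" if "x \<in> S" for x
  proof (cases "x = 0")
    case True
    then show ?thesis using lin by (simp add: linear_0)
  next
    case False
    have "(1 / norm x) *\<^sub>R x \<in> K"
      using that False S by (simp add: K_def subspace_scale)
    then have "((1 / norm x) *\<^sub>R x) \<bullet> f ((1 / norm x) *\<^sub>R x) \<le> l"
      unfolding l_def by (rule max)
    then have "(x \<bullet> f x) / (norm x)\<^sup>2 \<le> l"
      using lin by (simp add: linear_scale power2_eq_square)
    then show ?thesis
      using False by (simp add: divide_le_eq power2_norm_eq_inner mult.commute)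
  qed
  define g where "g x = l *\<^sub>R x - f x" for x
  have "g v = 0"
  proof (rule self_adjoint_psd_kernel[where g=g and S=S and v=v])
    show "linear g"
      unfolding g_def using lin by (intro linearI) (simp_all add: linear_add linear_scale
          algebra_simps)
    show "g x \<bullet> y = x \<bullet> g y" for x y
      by (simp add: g_def inner_diff_left inner_diff_right sa)
    show "g x \<in> S" if "x \<in> S" for x
      using that inv S by (simp add: g_def subspace_diff subspace_scale)
    show "0 \<le> x \<bullet> g x" if "x \<in> S" for x
      using bound[OF that] by (simp add: g_def inner_diff_right)
    show "v \<bullet> g v = 0"
      using nv by (simp add: g_def inner_diff_right l_def norm_eq_1)
  qed (use S vS in auto)
  then show ?thesis
    using that vS nv by (simp add: g_def l_def)
qed

definition orthonormal_eigenbasis :: "('a::euclidean_space \<Rightarrow> 'a) \<Rightarrow> 'a set \<Rightarrow> 'a set \<Rightarrow> bool" where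
  "orthonormal_eigenbasis f S B \<longleftrightarrow> finite B \<and> B \<subseteq> S \<and> pairwise orthogonal B
    \<and> (\<forall>b\<in>B. norm b = 1 \<and> (\<exists>\<mu>. f b = \<mu> *\<^sub>R b)) \<and> (\<forall>x\<in>S. x = (\<Sum>b\<in>B. (b \<bullet> x) *\<^sub>R b))"

lemma orthonormal_eigenbasis_insert:
  assumes B: "orthonormal_eigenbasis f {x \<in> S. v \<bullet> x = 0} B"
    and S: "subspace S" and v: "v \<in> S" "norm v = 1" "f v = \<mu> *\<^sub>R v"
  shows "orthonormal_eigenbasis f S (insert v B)"
proof -
  have orth: "b \<bullet> v = 0" if "b \<in> B" for b
    using B that by (auto simp: orthonormal_eigenbasis_def inner_commute)
  have vB: "v \<notin> B"
    using orth v(2) by (auto simp: norm_eq_1)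
  have "x = (\<Sum>b\<in>insert v B. (b \<bullet> x) *\<^sub>R b)" if x: "x \<in> S" for x
  proof -
    define x' where "x' = x - (v \<bullet> x) *\<^sub>R v"
    have "x' \<in> {x \<in> S. v \<bullet> x = 0}"
      using x S v by (simp add: x'_def subspace_diff subspace_scale inner_diff_right norm_eq_1)
    then have "x' = (\<Sum>b\<in>B. (b \<bullet> x') *\<^sub>R b)"
      using B by (simp add: orthonormal_eigenbasis_def)
    also have "\<dots> = (\<Sum>b\<in>B. (b \<bullet> x) *\<^sub>R b)"
      by (intro sum.cong refl) (simp add: x'_def inner_diff_right orth)
    finally show ?thesis
      using B vB by (simp add: orthonormal_eigenbasis_def x'_def algebra_simps)
  qed
  then show ?thesis
    using B v orth
    by (auto simp: orthonormal_eigenbasis_def pairwise_insert orthogonal_def inner_commute)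
qed

lemma self_adjoint_orthonormal_eigenbasis:
  fixes f :: "'a::euclidean_space \<Rightarrow> 'a"
  assumes lin: "linear f" and sa: "\<And>x y. f x \<bullet> y = x \<bullet> f y"
  shows "subspace S \<Longrightarrow> (\<And>x. x \<in> S \<Longrightarrow> f x \<in> S) \<Longrightarrow> \<exists>B. orthonormal_eigenbasis f S B"
proof (induction "dim S" arbitrary: S rule: less_induct)
  case less
  note S = less.prems(1) and inv = less.prems(2)
  show ?case
  proof (cases "S \<subseteq> {0}")
    case True
    then show ?thesis
      by (intro exI[of _ "{}"]) (auto simp: orthonormal_eigenbasis_def)
  next
    case False
    then obtain x0 where "x0 \<in> S" "x0 \<noteq> 0" by auto
    then obtain v where v: "v \<in> S" "norm v = 1" "f v = (v \<bullet> f v) *\<^sub>R v"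
      using self_adjoint_eigenvector_in_subspace[OF lin sa S inv] by blast
    define S' where "S' = {x \<in> S. v \<bullet> x = 0}"
    have S': "subspace S'"
      unfolding S'_def subspace_def using S
      by (auto simp: subspace_0 subspace_add subspace_scale inner_add_right)
    have inv': "f x \<in> S'" if "x \<in> S'" for x
      using that inv sa[of v x] by (subst (asm) v(3)) (simp add: S'_def)
    have "v \<notin> S'"
      using v by (simp add: S'_def norm_eq_1)
    then have "dim S' < dim S"
      using dim_psubset[of S' S] S S' v by (metis S'_def mem_Collect_eq psubsetI span_eq_iff
          subsetI)
    then obtain B where "orthonormal_eigenbasis f S' B"
      using less.hyps[OF _ S' inv'] by blast
    then show ?thesis
      unfolding S'_def using orthonormal_eigenbasis_insert S v by blast
  qed
qed

lemma symmetric_matrix_orthonormal_eigenbasis: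
  fixes A :: "real^'n^'n"
  assumes "transpose A = A"
  obtains B where "finite B" "pairwise orthogonal B" "\<And>b. b \<in> B \<Longrightarrow> norm b = 1"
    "\<And>b. b \<in> B \<Longrightarrow> \<exists>\<mu>. A *v b = \<mu> *\<^sub>R b" "\<And>x. x = (\<Sum>b\<in>B. (b \<bullet> x) *\<^sub>R b)"
  using self_adjoint_orthonormal_eigenbasis[of "(*v) A" UNIV]
    symmetric_matrix_self_adjoint[OF assms]
  by (auto simp: matrix_vector_mul_linear orthonormal_eigenbasis_def)

lemma inner_orthonormal_sum:
  assumes "finite B" "pairwise orthogonal B" "c \<in> B" "norm c = 1"
  shows "c \<bullet> (\<Sum>b\<in>B. a b *\<^sub>R b) = a c"
proof -
  have "c \<bullet> (\<Sum>b\<in>B. a b *\<^sub>R b) = (\<Sum>b\<in>B. if b = c then a c else 0)"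
    using assms unfolding inner_sum_right
    by (intro sum.cong refl) (auto simp: norm_eq_1 pairwise_def orthogonal_def inner_commute)
  then show ?thesis
    using assms by simp
qed

lemma sym_pos_injective: "sym_pos_def S \<Longrightarrow> S *v x = 0 \<Longrightarrow> x = 0"
  for S :: "real^'n^'n"
  unfolding sym_pos_def_def by (metis inner_zero_right less_irrefl)

lemma sym_pos_invertible: "sym_pos_def S \<Longrightarrow> invertible S"
  for S :: "real^'n^'n"
  unfolding invertible_left_inverse matrix_left_invertible_ker by (blast intro: sym_pos_injective)

lemma sym_pos_eigenvalue_pos:
  fixes A :: "real^'n^'n"
  assumes "sym_pos_def A" "A *v b = \<mu> *\<^sub>R b" "b \<noteq> 0"
  shows "\<mu> > 0"
proof -
  have "b \<bullet> (A *v b) > 0"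
    using assms(1,3) by (simp add: sym_pos_def_def)
  then have "\<mu> * (b \<bullet> b) > 0"
    using assms(2) by simp
  then show ?thesis
    using inner_ge_zero[of b] by (auto simp: zero_less_mult_iff)
qed

definition spectral_matrix :: "(real^'n) set \<Rightarrow> (real^'n \<Rightarrow> real) \<Rightarrow> real^'n^'n" where
  "spectral_matrix B c = matrix (\<lambda>x. \<Sum>b\<in>B. (c b * (b \<bullet> x)) *\<^sub>R b)"

lemma spectral_matrix_mult: "spectral_matrix B c *v x = (\<Sum>b\<in>B. (c b * (b \<bullet> x)) *\<^sub>R b)"
proof -
  have "linear (\<lambda>x. \<Sum>b\<in>B. (c b * (b \<bullet> x)) *\<^sub>R b)"
    by (intro linearI) (simp_all add: inner_add_right distrib_left scaleR_add_left sum.distrib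
        scaleR_sum_right mult.left_commute)
  then show ?thesis
    by (simp add: spectral_matrix_def matrix_works)
qed

lemma spectral_matrix_cong: "(\<And>b. b \<in> B \<Longrightarrow> c b = d b) \<Longrightarrow> spectral_matrix B c = spectral_matrix B d"
  by (simp add: spectral_matrix_def)

lemma inner_spectral_matrix:
  "(spectral_matrix B c *v x) \<bullet> y = (\<Sum>b\<in>B. c b * (b \<bullet> x) * (b \<bullet> y))"
  by (simp add: spectral_matrix_mult inner_sum_left)

lemma transpose_spectral_matrix: "transpose (spectral_matrix B c) = spectral_matrix B c"
  by (rule symmetric_matrixI)
    (simp add: inner_spectral_matrix inner_commute[of _ "spectral_matrix B c *v _"] mult_ac)

context
  fixes B :: "(real^'n) set"
  assumes finite: "finite B" and orth: "pairwise orthogonal B" and unit: "\<And>b. b \<in> B \<Longrightarrow> norm b = 1"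
    and expansion: "\<And>x. x = (\<Sum>b\<in>B. (b \<bullet> x) *\<^sub>R b)"
begin

lemma spectral_matrix_mult_spectral_matrix:
  "spectral_matrix B c ** spectral_matrix B d = spectral_matrix B (\<lambda>b. c b * d b)"
proof -
  have "c' \<bullet> (spectral_matrix B d *v x) = d c' * (c' \<bullet> x)" if "c' \<in> B" for c' x
    unfolding spectral_matrix_mult using inner_orthonormal_sum[OF finite orth that unit[OF that]] .
  then show ?thesis
    by (simp add: matrix_eq spectral_matrix_mult mult.assoc flip: matrix_vector_mul_assoc)
qed

lemma sym_pos_spectral_matrix:
  assumes "\<And>b. b \<in> B \<Longrightarrow> c b > 0"
  shows "sym_pos_def (spectral_matrix B c)"
  unfolding sym_pos_def_def
proof (intro conjI allI impI transpose_spectral_matrix)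
  fix x :: "real^'n" assume "x \<noteq> 0"
  then obtain b where b: "b \<in> B" "b \<bullet> x \<noteq> 0"
    using expansion[of x] by (metis (no_types, lifting) scale_zero_left sum.neutral)
  have "0 < (\<Sum>b\<in>B. c b * (b \<bullet> x) * (b \<bullet> x))"
    using b assms by (intro sum_pos2[OF finite b(1)])
      (auto simp: less_imp_le mult.assoc simp flip: power2_eq_square)
  then show "x \<bullet> (spectral_matrix B c *v x) > 0"
    by (simp add: inner_spectral_matrix inner_commute[of x])
qed

lemma spectral_matrix_eigenvalues:
  assumes "\<And>b. b \<in> B \<Longrightarrow> A *v b = \<mu> b *\<^sub>R b"
  shows "spectral_matrix B \<mu> = A"
proof -
  have "A *v x = A *v (\<Sum>b\<in>B. (b \<bullet> x) *\<^sub>R b)" for x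
    using expansion by metis
  then show ?thesis
    by (simp add: matrix_eq spectral_matrix_mult vec.sum matrix_vector_mult_scaleR assms
        mult.commute)
qed

end

lemma sym_pos_sqrt_exists:
  fixes A :: "real^'n^'n"
  assumes A: "sym_pos_def A"
  shows "\<exists>S. sym_pos_def S \<and> S ** S = A"
proof -
  obtain B where B: "finite B" "pairwise orthogonal B" "\<And>b. b \<in> B \<Longrightarrow> norm b = 1"
    "\<And>b. b \<in> B \<Longrightarrow> \<exists>\<mu>. A *v b = \<mu> *\<^sub>R b" "\<And>x. x = (\<Sum>b\<in>B. (b \<bullet> x) *\<^sub>R b)"
    using A symmetric_matrix_orthonormal_eigenbasis[of A] by (auto simp: sym_pos_def_def)
  obtain \<mu> where \<mu>: "\<And>b. b \<in> B \<Longrightarrow> A *v b = \<mu> b *\<^sub>R b"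
    using B(4) by metis
  have \<mu>_pos: "\<mu> b > 0" if "b \<in> B" for b
    using sym_pos_eigenvalue_pos[OF A \<mu>[OF that]] B(3)[OF that] by (metis norm_zero zero_neq_one)
  let ?S = "spectral_matrix B (\<lambda>b. sqrt (\<mu> b))"
  have "?S ** ?S = spectral_matrix B (\<lambda>b. sqrt (\<mu> b) * sqrt (\<mu> b))"
    by (rule spectral_matrix_mult_spectral_matrix[OF B(1-3,5)])
  also have "\<dots> = spectral_matrix B \<mu>"
    using \<mu>_pos by (intro spectral_matrix_cong) (simp add: abs_of_pos)
  moreover have "sym_pos_def ?S"
    by (intro sym_pos_spectral_matrix[OF B(1-3,5)] real_sqrt_gt_zero \<mu>_pos)
  ultimately show ?thesis
    using spectral_matrix_eigenvalues[OF B(1-3,5) \<mu>] by metis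
qed

lemma sym_pos_sqrt_eigenvector:
  fixes S :: "real^'n^'n"
  assumes S: "sym_pos_def S" and b: "(S ** S) *v b = \<mu> *\<^sub>R b" "b \<noteq> 0"
  shows "S *v b = sqrt \<mu> *\<^sub>R b"
proof -
  have "\<mu> * (b \<bullet> b) = (S *v b) \<bullet> (S *v b)"
    using b(1) S
    by (simp add: sym_pos_def_def symmetric_matrix_self_adjoint flip: matrix_vector_mul_assoc)
  also have "\<dots> > 0"
    using sym_pos_injective[OF S] b(2) by auto
  finally have "\<mu> > 0"
    using inner_ge_zero[of b] by (auto simp: zero_less_mult_iff)
  define w where "w = S *v b - sqrt \<mu> *\<^sub>R b"
  have Sw: "S *v w = - sqrt \<mu> *\<^sub>R w"
    using b(1) \<open>\<mu> > 0\<close>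
    by (simp add: w_def matrix_vector_mult_diff_distrib matrix_vector_mult_scaleR algebra_simps
        flip: matrix_vector_mul_assoc)
  have "w = 0"
  proof (rule ccontr)
    assume "w \<noteq> 0"
    then have "- sqrt \<mu> > 0"
      using sym_pos_eigenvalue_pos[OF S Sw] by blast
    then show False
      using \<open>\<mu> > 0\<close> by simp
  qed
  then show ?thesis
    by (simp add: w_def)
qed

lemma sym_pos_sqrt_unique:
  fixes S T :: "real^'n^'n"
  assumes S: "sym_pos_def S" and T: "sym_pos_def T" and eq: "S ** S = T ** T"
  shows "S = T"
proof -
  have "transpose (S ** S) = S ** S"
    using S by (simp add: sym_pos_def_def matrix_transpose_mul)
  then obtain B where B: "finite B" "pairwise orthogonal B" "\<And>b. b \<in> B \<Longrightarrow> norm b = 1"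
    "\<And>b. b \<in> B \<Longrightarrow> \<exists>\<mu>. (S ** S) *v b = \<mu> *\<^sub>R b" "\<And>x. x = (\<Sum>b\<in>B. (b \<bullet> x) *\<^sub>R b)"
    by (rule symmetric_matrix_orthonormal_eigenbasis) blast
  have "S *v b = T *v b" if b: "b \<in> B" for b
  proof -
    obtain \<mu> where "(S ** S) *v b = \<mu> *\<^sub>R b"
      using B(4)[OF b] by blast
    moreover have "b \<noteq> 0"
      using B(3)[OF b] by auto
    ultimately show ?thesis
      using sym_pos_sqrt_eigenvector[OF S] sym_pos_sqrt_eigenvector[OF T] eq by metis
  qed
  then have "S *v x = T *v x" for x
    by (subst (1 2) B(5)) (simp add: vec.sum matrix_vector_mult_scaleR)
  then show ?thesis
    by (simp add: matrix_eq)
qed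

lemma matrix_sqrt:
  fixes A :: "real^'n^'n"
  assumes "sym_pos_def A"
  shows "sym_pos_def (matrix_sqrt A)" "matrix_sqrt A ** matrix_sqrt A = A"
proof -
  have "\<exists>!S. sym_pos_def S \<and> S ** S = A"
    using sym_pos_sqrt_exists[OF assms] sym_pos_sqrt_unique by metis
  then have "sym_pos_def (matrix_sqrt A) \<and> matrix_sqrt A ** matrix_sqrt A = A"
    unfolding matrix_sqrt_def by (rule theI')
  then show "sym_pos_def (matrix_sqrt A)" "matrix_sqrt A ** matrix_sqrt A = A"
    by simp_all
qed

context
  fixes A :: "real^'n^'n"
  assumes A: "sym_pos_def A"
begin

lemma transpose_matrix_sqrt: "transpose (matrix_sqrt A) = matrix_sqrt A"
  using matrix_sqrt(1)[OF A] by (simp add: sym_pos_def_def)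

lemma matrix_sqrt_inv_left: "matrix_sqrt_inv A ** matrix_sqrt A = mat 1"
  and matrix_sqrt_inv_right: "matrix_sqrt A ** matrix_sqrt_inv A = mat 1"
  using sym_pos_invertible[OF matrix_sqrt(1)[OF A]]
  by (simp_all add: matrix_sqrt_inv_def matrix_inv_left matrix_inv_right)

lemma matrix_sqrt_inv_right_mult: "matrix_sqrt A *v (matrix_sqrt_inv A *v v) = v"
  by (simp add: matrix_vector_mul_assoc matrix_sqrt_inv_right)

lemma transpose_matrix_sqrt_inv: "transpose (matrix_sqrt_inv A) = matrix_sqrt_inv A"
proof -
  have "transpose (matrix_sqrt_inv A) = transpose (matrix_sqrt_inv A) ** matrix_sqrt A **
      matrix_sqrt_inv A"
    by (simp add: matrix_mul_assoc[symmetric] matrix_sqrt_inv_right)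
  also have "transpose (matrix_sqrt_inv A) ** matrix_sqrt A
      = transpose (matrix_sqrt A ** matrix_sqrt_inv A)"
    by (simp add: matrix_transpose_mul transpose_matrix_sqrt)
  finally show ?thesis
    by (simp add: matrix_sqrt_inv_right)
qed

lemma matrix_sqrt_inv_whitens: "matrix_sqrt_inv A ** A ** matrix_sqrt_inv A = mat 1"
proof -
  have "matrix_sqrt_inv A ** A ** matrix_sqrt_inv A
      = matrix_sqrt_inv A ** (matrix_sqrt A ** matrix_sqrt A) ** matrix_sqrt_inv A"
    by (simp add: matrix_sqrt(2)[OF A])
  also have "\<dots> = (matrix_sqrt_inv A ** matrix_sqrt A) ** (matrix_sqrt A ** matrix_sqrt_inv A)"
    by (simp only: matrix_mul_assoc)
  finally show ?thesis
    by (simp add: matrix_sqrt_inv_left matrix_sqrt_inv_right)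
qed

lemma matrix_sqrt_inv_whitens_mult:
  "matrix_sqrt_inv A *v (A *v (matrix_sqrt_inv A *v w)) = w"
  by (simp add: matrix_vector_mul_assoc matrix_mul_assoc matrix_sqrt_inv_whitens)

lemma matrix_sqrt_inv_square: "matrix_sqrt_inv A ** matrix_sqrt_inv A = matrix_inv A"
proof -
  have "(matrix_sqrt_inv A ** matrix_sqrt_inv A) ** A
      = matrix_sqrt_inv A ** (matrix_sqrt_inv A ** matrix_sqrt A) ** matrix_sqrt A"
    by (simp add: matrix_sqrt(2)[OF A] flip: matrix_mul_assoc)
  then have left: "(matrix_sqrt_inv A ** matrix_sqrt_inv A) ** A = mat 1"
    by (simp add: matrix_sqrt_inv_left)
  have "matrix_sqrt_inv A ** matrix_sqrt_inv A
      = (matrix_sqrt_inv A ** matrix_sqrt_inv A) ** (A ** matrix_inv A)"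
    by (simp add: matrix_inv_right[OF sym_pos_invertible[OF A]])
  also have "\<dots> = matrix_inv A"
    by (simp add: matrix_mul_assoc left)
  finally show ?thesis .
qed

lemma matrix_sqrt_inv_square_mult: "matrix_sqrt_inv A *v (matrix_sqrt_inv A *v v) = matrix_inv A
    *v v"
  by (simp add: matrix_vector_mul_assoc matrix_sqrt_inv_square)

end

section \<open>Least squares algebra\<close>

lemma vfst_vjoin [simp]: "vfst (vjoin a b) = a"
  and vsnd_vjoin [simp]: "vsnd (vjoin a b) = b"
  by (simp_all add: vfst_def vsnd_def vjoin_def vec_eq_iff)

lemma vjoin_vfst_vsnd: "vjoin (vfst v) (vsnd v) = v"
  by (simp add: vfst_def vsnd_def vjoin_def vec_eq_iff split: sum.split)

lemma vjoin_eq_iff: "vjoin a b = vjoin c d \<longleftrightarrow> a = c \<and> b = d"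
  by (metis vfst_vjoin vsnd_vjoin)

lemma vjoin_add: "vjoin a b + vjoin c d = vjoin (a + c) (b + d)"
  and vjoin_diff: "vjoin a b - vjoin c d = vjoin (a - c) (b - d)"
  and vjoin_zero: "vjoin 0 0 = 0"
  by (simp_all add: vjoin_def vec_eq_iff split: sum.split)

lemma sum_UNIV_Plus:
  "(\<Sum>i\<in>UNIV. f i) = (\<Sum>j\<in>UNIV. f (Inl j)) + (\<Sum>j\<in>UNIV. f (Inr j))"
  for f :: "'a::finite + 'b::finite \<Rightarrow> 'c::comm_monoid_add"
  using sum.Plus[of "UNIV :: 'a set" "UNIV :: 'b set" f] by (simp add: UNIV_Plus_UNIV)

lemma matrix_vector_mult_vjoin: "X *v vjoin a b = Xfst X *v a + Xsnd X *v b"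
  by (simp add: vec_eq_iff matrix_vector_mult_def Xfst_def Xsnd_def vjoin_def sum_UNIV_Plus)

lemma transpose_matrix_vector_mult_split:
  "transpose X *v w = vjoin (transpose (Xfst X) *v w) (transpose (Xsnd X) *v w)"
  by (simp add: vec_eq_iff matrix_vector_mult_def Xfst_def Xsnd_def vjoin_def transpose_def
      split: sum.split)

lemma Bn_mult: "Bn X *v b = vjoin (G12 X *v b) (- b)"
  by (simp add: vec_eq_iff matrix_vector_mult_def Bn_def vjoin_def mat_def sum_negf
      if_distrib[where f="\<lambda>x. x * _"] cong: if_cong split: sum.split)

lemma Cn_mult: "Cn X *v z = vjoin (matrix_sqrt_inv (transpose (Xfst X) ** Xfst X) *v z) 0"
  by (simp add: vec_eq_iff matrix_vector_mult_def Cn_def vjoin_def split: sum.split)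

lemma Dn_mult:
  "Dn X *v z = vjoin (- (G12 X *v (matrix_sqrt_inv (M22 X) *v z))) (matrix_sqrt_inv (M22 X) *v z)"
proof -
  have "Dn X *v z
      = vjoin ((- (G12 X ** matrix_sqrt_inv (M22 X))) *v z) (matrix_sqrt_inv (M22 X) *v z)"
    by (simp add: vec_eq_iff matrix_vector_mult_def Dn_def vjoin_def split: sum.split)
  then show ?thesis
    by (simp add: uminus_matrix_vector_mult matrix_vector_mul_assoc)
qed

definition resid_maker :: "real^('k1::finite+'k2::finite)^'n \<Rightarrow> real^'n^'n" where
  "resid_maker X = mat 1 - proj_R X"

(* Q1 X *v u and Q2 X *v u are the components Z1 and Z2 of the statement, as functions of the
   noise u. *)
definition Q1 :: "real^('k1::finite+'k2::finite)^'n \<Rightarrow> real^'n^'k1" where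
  "Q1 X = matrix_sqrt_inv (transpose (Xfst X) ** Xfst X) ** transpose (Xfst X)"

definition Q2 :: "real^('k1::finite+'k2::finite)^'n \<Rightarrow> real^'n^'k2" where
  "Q2 X = matrix_sqrt_inv (M22 X) ** transpose (Xsnd X) ** resid_maker X"

lemma M22_resid_maker: "M22 X = transpose (Xsnd X) ** resid_maker X ** Xsnd X"
  by (simp add: M22_def resid_maker_def)

lemma proj_R_mult:
  "proj_R X *v y = Xfst X *v (matrix_inv (transpose (Xfst X) ** Xfst X) *v (transpose (Xfst X) *v
      y))"
  by (simp add: proj_R_def flip: matrix_vector_mul_assoc)

lemma resid_maker_mult: "resid_maker X *v y = y - proj_R X *v y"
  by (simp add: resid_maker_def matrix_vector_mult_diff_rdistrib)

lemma M22_mult: "M22 X *v x = transpose (Xsnd X) *v (resid_maker X *v (Xsnd X *v x))"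
  by (simp add: M22_resid_maker flip: matrix_vector_mul_assoc)

lemma Q1_mult:
  "Q1 X *v u = matrix_sqrt_inv (transpose (Xfst X) ** Xfst X) *v (transpose (Xfst X) *v u)"
  by (simp add: Q1_def matrix_vector_mul_assoc)

lemma Q2_mult: "Q2 X *v u = matrix_sqrt_inv (M22 X) *v (transpose (Xsnd X) *v (resid_maker X *v u))"
  by (simp add: Q2_def matrix_vector_mul_assoc matrix_mul_assoc)

lemma Xfst_G12_mult: "Xfst X *v (G12 X *v v) = proj_R X *v (Xsnd X *v v)"
  by (simp add: G12_def proj_R_def matrix_vector_mul_assoc matrix_mul_assoc)

context
  fixes X :: "real^('k1::finite+'k2::finite)^'n"
  assumes inj: "inj ((*v) X)"
begin

lemma inj_Xfst: "inj ((*v) (Xfst X))"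
proof (rule injI)
  fix a b assume "Xfst X *v a = Xfst X *v b"
  then have "X *v vjoin a 0 = X *v vjoin b 0"
    by (simp add: matrix_vector_mult_vjoin)
  then show "a = b"
    using inj by (auto dest: injD simp: vjoin_eq_iff)
qed

lemma sym_pos_gram_Xfst: "sym_pos_def (transpose (Xfst X) ** Xfst X)"
  by (rule sym_pos_gram[OF inj_Xfst])

lemma gram_Xfst_inv:
  "(transpose (Xfst X) ** Xfst X) *v (matrix_inv (transpose (Xfst X) ** Xfst X) *v v) = v"
  "matrix_inv (transpose (Xfst X) ** Xfst X) *v ((transpose (Xfst X) ** Xfst X) *v v) = v"
  using sym_pos_invertible[OF sym_pos_gram_Xfst]
  by (simp_all add: matrix_vector_mul_assoc matrix_inv_left matrix_inv_right)

lemma Xfst_resid_maker: "transpose (Xfst X) *v (resid_maker X *v y) = 0"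
  using gram_Xfst_inv(1)
  by (simp add: resid_maker_mult proj_R_mult matrix_vector_mult_diff_distrib
      flip: matrix_vector_mul_assoc)

lemma resid_maker_self_adjoint: "(resid_maker X *v y) \<bullet> z = y \<bullet> (resid_maker X *v z)"
proof -
  have "transpose (matrix_inv (transpose (Xfst X) ** Xfst X))
      = matrix_inv (transpose (Xfst X) ** Xfst X)"
    using transpose_matrix_sqrt_inv[OF sym_pos_gram_Xfst]
    by (metis matrix_sqrt_inv_square[OF sym_pos_gram_Xfst] matrix_transpose_mul)
  then show ?thesis
    by (simp add: resid_maker_mult proj_R_mult inner_diff_left inner_diff_right
        inner_matrix_vector_transpose)
qed

lemma transpose_resid_maker: "transpose (resid_maker X) = resid_maker X"
  by (rule symmetric_matrixI) (rule resid_maker_self_adjoint)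

lemma resid_maker_idem: "resid_maker X *v (resid_maker X *v y) = resid_maker X *v y"
  by (simp add: resid_maker_mult[where y = "resid_maker X *v y"] proj_R_mult Xfst_resid_maker)

lemma resid_maker_Xsnd_eq_0: "resid_maker X *v (Xsnd X *v x) = 0 \<Longrightarrow> x = 0"
proof -
  define g
    where "g = matrix_inv (transpose (Xfst X) ** Xfst X) *v (transpose (Xfst X) *v (Xsnd X *v x))"
  assume "resid_maker X *v (Xsnd X *v x) = 0"
  then have "Xsnd X *v x = Xfst X *v g"
    by (simp add: resid_maker_mult proj_R_mult g_def)
  then have "X *v vjoin (- g) x = X *v 0"
    by (simp add: matrix_vector_mult_vjoin vec.neg)
  then show "x = 0"
    using inj by (metis injD vjoin_zero vsnd_vjoin)
qed

lemma M22_gram: "M22 X = transpose (resid_maker X ** Xsnd X) ** (resid_maker X ** Xsnd X)"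
  by (simp add: matrix_eq M22_mult matrix_transpose_mul transpose_resid_maker resid_maker_idem
      flip: matrix_vector_mul_assoc)

lemma sym_pos_M22: "sym_pos_def (M22 X)"
  unfolding M22_gram
  by (rule sym_pos_gram)
    (auto simp: inj_matrix_vector_mult_iff resid_maker_Xsnd_eq_0 simp flip: matrix_vector_mul_assoc)

lemma transpose_Q1_mult:
  "transpose (Q1 X) *v w = Xfst X *v (matrix_sqrt_inv (transpose (Xfst X) ** Xfst X) *v w)"
  by (simp add: Q1_def matrix_transpose_mul transpose_matrix_sqrt_inv[OF sym_pos_gram_Xfst]
      matrix_vector_mul_assoc)

lemma transpose_Q2_mult:
  "transpose (Q2 X) *v w = resid_maker X *v (Xsnd X *v (matrix_sqrt_inv (M22 X) *v w))"
  by (simp add: Q2_def matrix_transpose_mul transpose_matrix_sqrt_inv[OF sym_pos_M22]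
      transpose_resid_maker matrix_vector_mul_assoc matrix_mul_assoc)

lemma Q1_orthonormal: "Q1 X ** transpose (Q1 X) = mat 1"
proof -
  have "Q1 X *v (transpose (Q1 X) *v w) = w" for w
    using matrix_sqrt_inv_whitens_mult[OF sym_pos_gram_Xfst, of w]
    by (simp add: Q1_mult transpose_Q1_mult
        matrix_vector_mul_assoc[of "transpose (Xfst X)" "Xfst X"])
  then show ?thesis
    by (simp add: matrix_eq flip: matrix_vector_mul_assoc)
qed

lemma Q2_orthonormal: "Q2 X ** transpose (Q2 X) = mat 1"
proof -
  have "Q2 X *v (transpose (Q2 X) *v w) = w" for w
    using matrix_sqrt_inv_whitens_mult[OF sym_pos_M22, of w]
    by (simp add: Q2_mult transpose_Q2_mult resid_maker_idem flip: M22_mult)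
  then show ?thesis
    by (simp add: matrix_eq flip: matrix_vector_mul_assoc)
qed

lemma Q1_Q2_orthogonal: "Q1 X ** transpose (Q2 X) = 0"
  by (simp add: matrix_eq Q1_mult transpose_Q2_mult Xfst_resid_maker flip: matrix_vector_mul_assoc)

lemma betaR_eqI:
  assumes "transpose (Xfst X) *v (Xfst X *v a) = transpose (Xfst X) *v Y"
  shows "betaR X Y = vjoin a 0"
  using gram_Xfst_inv(2)[of a] assms
  by (simp add: betaR_def matrix_vector_mul_assoc[of "transpose (Xfst X)" "Xfst X"])

lemma betaU_eqI:
  assumes "transpose X *v (X *v b) = transpose X *v Y"
  shows "betaU X Y = b"
  using matrix_inv_left[OF sym_pos_invertible[OF sym_pos_gram[OF inj]]] assms
  by (simp add: betaU_def matrix_vector_mul_assoc flip: assms)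

lemma betaR_error:
  "betaR X (X *v vjoin b1 b2 + u) - vjoin b1 b2 = Bn X *v b2 + Cn X *v (Q1 X *v u)"
proof -
  let ?X1 = "Xfst X"
  define h where "h = matrix_inv (transpose ?X1 ** ?X1) *v (transpose ?X1 *v u)"
  have "Cn X *v (Q1 X *v u) = vjoin h 0"
    by (simp add: Cn_mult Q1_mult h_def matrix_sqrt_inv_square_mult[OF sym_pos_gram_Xfst])
  moreover have "betaR X (X *v vjoin b1 b2 + u) = vjoin (b1 + G12 X *v b2 + h) 0"
  proof (rule betaR_eqI)
    have "transpose ?X1 *v (?X1 *v (G12 X *v b2)) = transpose ?X1 *v (Xsnd X *v b2)"
      by (simp add: Xfst_G12_mult proj_R_mult gram_Xfst_inv
          matrix_vector_mul_assoc[of "transpose ?X1" ?X1])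
    moreover have "transpose ?X1 *v (?X1 *v h) = transpose ?X1 *v u"
      by (simp add: h_def gram_Xfst_inv matrix_vector_mul_assoc[of "transpose ?X1" ?X1])
    ultimately show "transpose ?X1 *v (?X1 *v (b1 + G12 X *v b2 + h))
        = transpose ?X1 *v (X *v vjoin b1 b2 + u)"
      by (simp add: matrix_vector_mult_vjoin matrix_vector_right_distrib)
  qed
  ultimately show ?thesis
    by (simp add: Bn_mult vjoin_add vjoin_diff)
qed

lemma betaU_error:
  "betaU X (X *v vjoin b1 b2 + u) - vjoin b1 b2 = Cn X *v (Q1 X *v u) + Dn X *v (Q2 X *v u)"
proof -
  let ?X1 = "Xfst X" and ?X2 = "Xsnd X" and ?R = "resid_maker X"
  define h where "h = matrix_inv (transpose ?X1 ** ?X1) *v (transpose ?X1 *v u)"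
  define e where "e = matrix_sqrt_inv (M22 X) *v (Q2 X *v u)"
  define d where "d = Cn X *v (Q1 X *v u) + Dn X *v (Q2 X *v u)"
  have d: "d = vjoin (h - G12 X *v e) e"
    by (simp add: d_def Cn_mult Dn_mult Q1_mult h_def e_def vjoin_add
        matrix_sqrt_inv_square_mult[OF sym_pos_gram_Xfst])
  have Me: "M22 X *v e = transpose ?X2 *v (?R *v u)"
  proof -
    have "M22 X *v (matrix_inv (M22 X) *v v) = v" for v
      using matrix_inv_right[OF sym_pos_invertible[OF sym_pos_M22]]
      by (simp add: matrix_vector_mul_assoc)
    then show ?thesis
      by (simp add: e_def Q2_mult matrix_sqrt_inv_square_mult[OF sym_pos_M22])
  qed
  \<comment> \<open>\<open>X d\<close> is the orthogonal projection of \<open>u\<close> onto the column space of \<open>X\<close>.\<close>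
  have Xd: "X *v d = proj_R X *v u + ?R *v (?X2 *v e)"
    by (simp add: d matrix_vector_mult_vjoin matrix_vector_mult_diff_distrib h_def Xfst_G12_mult
        resid_maker_mult proj_R_mult)
  have Pu: "proj_R X *v u = u - ?R *v u"
    by (simp add: resid_maker_mult)
  have "transpose ?X1 *v (X *v d) = transpose ?X1 *v u"
    by (simp add: Xd Pu matrix_vector_right_distrib matrix_vector_mult_diff_distrib
        Xfst_resid_maker)
  moreover have "transpose ?X2 *v (X *v d) = transpose ?X2 *v u"
    using Me by (simp add: Xd Pu matrix_vector_right_distrib matrix_vector_mult_diff_distrib
        flip: M22_mult)
  ultimately have "transpose X *v (X *v d) = transpose X *v u"
    by (simp add: transpose_matrix_vector_mult_split)
  then have "betaU X (X *v vjoin b1 b2 + u) = vjoin b1 b2 + d"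
    by (intro betaU_eqI) (simp add: matrix_vector_right_distrib)
  then show ?thesis
    by (simp add: d_def)
qed

lemma fitted_difference_norm:
  "norm (X *v betaR X (X *v vjoin b1 b2 + u) - X *v betaU X (X *v vjoin b1 b2 + u))
    = norm (Q2 X *v u + matrix_sqrt (M22 X) *v b2)"
proof -
  let ?Y = "X *v vjoin b1 b2 + u" and ?S = "matrix_sqrt (M22 X)" and ?R = "resid_maker X"
  have M: "sym_pos_def (M22 X)"
    by (rule sym_pos_M22)
  define w where "w = b2 + matrix_sqrt_inv (M22 X) *v (Q2 X *v u)"
  have "betaR X ?Y - betaU X ?Y = Bn X *v b2 - Dn X *v (Q2 X *v u)"
    using betaR_error[of b1 b2 u] betaU_error[of b1 b2 u]
    by (simp add: algebra_simps)
  also have "\<dots> = vjoin (G12 X *v w) (- w)"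
    by (simp add: Bn_mult Dn_mult w_def vjoin_diff matrix_vector_right_distrib)
  finally have "X *v betaR X ?Y - X *v betaU X ?Y = - (?R *v (Xsnd X *v w))"
    by (simp add: matrix_vector_mult_diff_distrib[symmetric] matrix_vector_mult_vjoin vec.neg
        Xfst_G12_mult resid_maker_mult)
  then have "(norm (X *v betaR X ?Y - X *v betaU X ?Y))\<^sup>2 = w \<bullet> (M22 X *v w)"
    by (simp add: power2_norm_eq_inner M22_mult inner_matrix_vector_transpose
        transpose_resid_maker resid_maker_idem)
  also have "\<dots> = (?S *v w) \<bullet> (?S *v w)"
    by (simp add: symmetric_matrix_self_adjoint[OF transpose_matrix_sqrt[OF M]]
        matrix_vector_mul_assoc
        matrix_sqrt(2)[OF M])
  also have "?S *v w = Q2 X *v u + ?S *v b2"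
    by (simp add: w_def matrix_vector_right_distrib matrix_sqrt_inv_right_mult[OF M])
  finally show ?thesis
    by (simp add: power2_norm_eq_inner[symmetric] power2_eq_iff_nonneg)
qed

lemma beta_tilde_error:
  fixes b1 :: "real^'k1" and b2 :: "real^'k2" and u :: "real^'n"
  shows "beta_tilde \<alpha> \<sigma> X (X *v vjoin b1 b2 + u) - vjoin b1 b2
    = Cn X *v (Q1 X *v u) + Dn X *v (Q2 X *v u)
      - (1 / (1 + exp (- 2 * \<alpha> * real CARD('k2))
               * exp (\<alpha> * (norm (Q2 X *v u + matrix_sqrt (M22 X) *v b2))\<^sup>2 / \<sigma>\<^sup>2)))
        *\<^sub>R (Dn X *v (Q2 X *v u) - Bn X *v b2)"
proof -
  let ?Y = "X *v vjoin b1 b2 + u" and ?\<beta> = "vjoin b1 b2"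
  have "beta_tilde \<alpha> \<sigma> X ?Y - ?\<beta>
      = (betaU X ?Y - ?\<beta>) - lambda_hat \<alpha> \<sigma> X ?Y *\<^sub>R ((betaU X ?Y - ?\<beta>) - (betaR X ?Y - ?\<beta>))"
    by (simp add: beta_tilde_def algebra_simps)
  then show ?thesis
    by (simp add: betaR_error betaU_error lambda_hat_def fitted_difference_norm)
qed

end

section \<open>Sampling distribution of the averaging estimator\<close>

lemma distr_scaled_beta_tilde_error:
  fixes X :: "real^('k1::finite+'k2::finite)^'n" and \<beta> :: "real^('k1+'k2)"
  assumes inj: "inj ((*v) X)" and \<sigma>: "\<sigma> > 0"
  shows "distr (model_dist X \<beta> \<sigma>) borel (\<lambda>Y. c *\<^sub>R (beta_tilde \<alpha> \<sigma> X Y - \<beta>))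
    = distr (gauss_vec \<sigma> \<Otimes>\<^sub>M gauss_vec \<sigma>) borel
        (\<lambda>(z1 :: real^'k1, z2 :: real^'k2).
           Cn X *v (c *\<^sub>R z1) + Dn X *v (c *\<^sub>R z2)
           - (1 / (1 + exp (- 2 * \<alpha> * real CARD('k2))
                     * exp (\<alpha> * (norm (z2 + matrix_sqrt (M22 X) *v vsnd \<beta>))\<^sup>2 / \<sigma>\<^sup>2)))
             *\<^sub>R (Dn X *v (c *\<^sub>R z2) - Bn X *v (c *\<^sub>R vsnd \<beta>)))"
    (is "distr _ borel ?H = distr _ borel ?F")
proof -
  let ?L = "\<lambda>u. (Q1 X *v u, Q2 X *v u)"
  have H_eq: "?H (X *v \<beta> + u) = ?F (?L u)" for u
    unfolding beta_tilde_error[OF inj, of \<alpha> \<sigma> "vfst \<beta>" "vsnd \<beta>" u, unfolded vjoin_vfst_vsnd]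
    by (simp add: matrix_vector_mult_scaleR algebra_simps)
  have "1 + exp a * exp b \<noteq> (0::real)" for a b
    by (metis add_pos_pos exp_gt_zero mult_pos_pos zero_less_one less_irrefl)
  then have "continuous_on UNIV ?F"
    unfolding case_prod_unfold using \<sigma> by (intro continuous_intros) auto
  then have meas_F: "?F \<in> borel_measurable borel"
    by (rule borel_measurable_continuous_onI)
  have meas_L: "?L \<in> borel_measurable borel"
    by (intro borel_measurable_linear linearI)
      (simp_all add: matrix_vector_right_distrib matrix_vector_mult_scaleR)
  have "(\<lambda>Y. Y - X *v \<beta>) \<in> borel_measurable borel"
    by (intro borel_measurable_continuous_onI continuous_intros)
  then have "(\<lambda>Y. ?F (?L (Y - X *v \<beta>))) \<in> borel_measurable borel"
    by (rule measurable_compose[OF measurable_compose[OF _ meas_L] meas_F])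
  moreover have "?H = (\<lambda>Y. ?F (?L (Y - X *v \<beta>)))"
    using H_eq[of "_ - X *v \<beta>"] by (simp add: fun_eq_iff)
  ultimately have meas_H: "?H \<in> borel_measurable borel"
    by simp
  have "distr (model_dist X \<beta> \<sigma>) borel ?H = distr (gauss_vec \<sigma>) borel (?H \<circ> (\<lambda>u. X *v \<beta> + u))"
    using meas_H by (simp add: model_dist_def distr_distr gauss_vec_def)
  also have "?H \<circ> (\<lambda>u. X *v \<beta> + u) = ?F \<circ> ?L"
    by (simp add: fun_eq_iff H_eq)
  also have "distr (gauss_vec \<sigma>) borel (?F \<circ> ?L) = distr (distr (gauss_vec \<sigma>) borel ?L) borel ?F"
    using meas_F meas_L by (simp add: distr_distr gauss_vec_def)
  also have "distr (gauss_vec \<sigma>) borel ?L = gauss_vec \<sigma> \<Otimes>\<^sub>M gauss_vec \<sigma>"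
    by (rule gauss_vec_orthonormal_rows[OF \<sigma> Q1_orthonormal[OF inj] Q2_orthonormal[OF inj]
          Q1_Q2_orthogonal[OF inj]])
  finally show ?thesis .
qed

lemma logistic_weight_complement:
  fixes a b :: real
  shows "1 / (1 + exp a * exp (- b)) = 1 - 1 / (1 + exp (- a) * exp b)"
proof -
  define E where "E = exp (- a) * exp b"
  have "E > 0"
    by (simp add: E_def)
  have inverse: "exp a * exp (- b) = 1 / E"
    by (simp add: E_def exp_minus field_simps)
  show ?thesis
    unfolding inverse E_def[symmetric] using \<open>E > 0\<close> by (simp add: field_simps)
qed

theorem proposition1:
  fixes X :: "real^('k1::finite+'k2::finite)^'n" and \<beta> :: "real^('k1+'k2)" and \<sigma> \<alpha> :: real
  assumes rank: "rank X = CARD('k1+'k2)"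
    and n_ge_k: "CARD('n) \<ge> CARD('k1+'k2)"
    and sigma_pos: "\<sigma> > 0"
    and alpha_pos: "\<alpha> > 0"
  shows
    "distr (model_dist X \<beta> \<sigma>) borel
        (\<lambda>Y. sqrt (real CARD('n)) *\<^sub>R (beta_tilde \<alpha> \<sigma> X Y - \<beta>))
     = distr (gauss_vec \<sigma> \<Otimes>\<^sub>M gauss_vec \<sigma>) borel
        (\<lambda>(z1 :: real^'k1::finite, z2 :: real^'k2::finite).
           Bn X *v (sqrt (real CARD('n)) *\<^sub>R vsnd \<beta>)
           + Cn X *v (sqrt (real CARD('n)) *\<^sub>R z1)
           + (1 / (1 + exp (2 * \<alpha> * real CARD('k2))
                     * exp (- \<alpha> * (norm (z2 + matrix_sqrt (M22 X) *v vsnd \<beta>))\<^sup>2 / \<sigma>\<^sup>2)))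
             *\<^sub>R (Dn X *v (sqrt (real CARD('n)) *\<^sub>R z2)
                  - Bn X *v (sqrt (real CARD('n)) *\<^sub>R vsnd \<beta>)))
     \<and> distr (model_dist X \<beta> \<sigma>) borel
        (\<lambda>Y. sqrt (real CARD('n)) *\<^sub>R (beta_tilde \<alpha> \<sigma> X Y - \<beta>))
     = distr (gauss_vec \<sigma> \<Otimes>\<^sub>M gauss_vec \<sigma>) borel
        (\<lambda>(z1 :: real^'k1::finite, z2 :: real^'k2::finite).
           Cn X *v (sqrt (real CARD('n)) *\<^sub>R z1)
           + Dn X *v (sqrt (real CARD('n)) *\<^sub>R z2)
           - (1 / (1 + exp (- 2 * \<alpha> * real CARD('k2))
                     * exp (\<alpha> * (norm (z2 + matrix_sqrt (M22 X) *v vsnd \<beta>))\<^sup>2 / \<sigma>\<^sup>2)))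
             *\<^sub>R (Dn X *v (sqrt (real CARD('n)) *\<^sub>R z2)
                  - Bn X *v (sqrt (real CARD('n)) *\<^sub>R vsnd \<beta>)))"
proof -
  have inj: "inj ((*v) X)"
    using rank by (simp add: full_rank_injective[symmetric])
  have weight: "1 / (1 + exp (2 * \<alpha> * real CARD('k2)) * exp (- \<alpha> * t / \<sigma>\<^sup>2))
      = 1 - 1 / (1 + exp (- 2 * \<alpha> * real CARD('k2)) * exp (\<alpha> * t / \<sigma>\<^sup>2))" for t
    using logistic_weight_complement[of "2 * \<alpha> * real CARD('k2)" "\<alpha> * t / \<sigma>\<^sup>2"] by simp
  show ?thesis
    unfolding weight distr_scaled_beta_tilde_error[OF inj sigma_pos]
    by (intro conjI refl arg_cong[where f = "distr (gauss_vec \<sigma> \<Otimes>\<^sub>M gauss_vec \<sigma>) borel"])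
      (auto simp: fun_eq_iff algebra_simps)
qed

end
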